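(* For $n\ge2$, with $\widetilde Q_n$, $\Sigma^2$, $\iota$, $f_n$, $f_{n+1}$ and $\epsilon_n$ as in the context, $$\iota_*\circ\Sigma^2\,[f_n\circ\epsilon_n]\;=\;[f_{n+1}\circ\epsilon_{n+1}]\quad\text{in }\pi_{2n+1}(\widetilde Q_{n+1}),$$ where $\epsilon_{n+1}:=\Sigma^2\epsilon_n$.
   Context: $\widetilde Q_n=\{(a,b)\in\mathbb R^{2n}\oplus\mathbb R^{2n}: |a|=|b|=1,\ \langle a,b\rangle=0\}$. For $S\subset V$, $\Sigma^2S=\{(\sqrt{1-|X|^2}\,v,X): v\in S, X\in\mathbb R^2,|X|\le1\}\subset V\oplus\mathbb R^2$, and for $f\colon P\to S$ with $P\subset U$, $\Sigma^2f(\sqrt{1-|X|^2}u,X)=(\sqrt{1-|X|^2}f(u),X)$. $j_+$ is the orientation-compatible orthogonal complex structure on $\mathbb R^2$, and $\iota\colon\Sigma^2\widetilde Q_n\to\widetilde Q_{n+1}$ is $(\sqrt{1-|X|^2}(a,b),X)\mapsto\big((\sqrt{1-|X|^2}a,X),(\sqrt{1-|X|^2}b,-j_+X)\big)$. Fix a unit vector $a\in\mathbb R^{2n}$; $f_n\colon S(a^\perp)\cong S^{2n-2}\to\widetilde Q_n$, $b\mapsto(a,b)$, is the inclusion of a fibre of $(a,b)\mapsto a$, and $f_{n+1}\colon S((a,0)^\perp)\to\widetilde Q_{n+1}$, $c\mapsto((a,0),c)$, where $S((a,0)^\perp)=S(a^\perp\oplus\mathbb R^2)=\Sigma^2S(a^\perp)$.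 $\epsilon_n$ is a generator of $\pi_{2n-1}(S(a^\perp))\cong\pi_{2n-1}(S^{2n-2})$ ($\cong\mathbb Z$ for $n=2$, $\mathbb Z/2$ for $n>2$), and $\epsilon_{n+1}=\Sigma^2\epsilon_n\in\pi_{2n+1}(S((a,0)^\perp))$. *)

theory Defs
  imports "HOL-Analysis.Analysis"
begin

text \<open>R^{2n} is modelled by a euclidean space 'a with DIM('a) = 2n; R^2 by complex,
  so V \<oplus> R^2 is 'v \<times> complex and j_+ is multiplication by the imaginary unit.\<close>

definition Qt :: "('v::real_inner \<times> 'v) set" where
  "Qt = {(a, b). norm a = 1 \<and> norm b = 1 \<and> inner a b = 0}"

definition perp_sphere :: "'v::real_inner \<Rightarrow> 'v set" where
  "perp_sphere a = {b. norm b = 1 \<and> inner a b = 0}"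

definition susp2_set :: "'u::real_normed_vector set \<Rightarrow> ('u \<times> complex) set" where
  "susp2_set S = {(sqrt (1 - (norm X)^2) *\<^sub>R v, X) | v X. v \<in> S \<and> norm X \<le> 1}"

text \<open>Sigma^2 f (sqrt(1-|X|^2) u, X) = (sqrt(1-|X|^2) f u, X) for u on the unit sphere.\<close>
definition susp2 :: "('u::real_normed_vector \<Rightarrow> 'v::real_normed_vector) \<Rightarrow> ('u \<times> complex \<Rightarrow> 'v \<times> complex)" where
  "susp2 f = (\<lambda>(w, X). if norm X < 1
      then (sqrt (1 - (norm X)^2) *\<^sub>R f ((1 / sqrt (1 - (norm X)^2)) *\<^sub>R w), X)
      else (0, X))"

definition iota :: "(('v::real_normed_vector \<times> 'v) \<times> complex) \<Rightarrow> (('v \<times> complex) \<times> ('v \<times> complex))" where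
  "iota = (\<lambda>((p, q), X). ((p, X), (q, - (\<i> * X))))"

definition fibre_incl :: "'v \<Rightarrow> 'v \<Rightarrow> 'v \<times> 'v" where
  "fibre_incl a = (\<lambda>b. (a, b))"

end

theory Submission
  imports Defs
begin

(* A point of the unit sphere of R^2n \<oplus> R^2 is (w, X) with |w|^2 + |X|^2 = 1, and there
  Sigma^2 eps is (w, X) \<mapsto> (G w, X) for the radial extension G w = |w| eps(w/|w|). Hence
  iota \<circ> Sigma^2 (f_n \<circ> eps) is (w, X) \<mapsto> ((|w| a, X), (G w, -j_+ X)), while
  f_(n+1) \<circ> Sigma^2 eps is (w, X) \<mapsto> ((a, 0), (G w, X)). In Qt one coordinate of an orthonormal
  pair can be moved along a straight line orthogonal to the other one and renormalised, as long
  as its two ends are never antipodal. This moves (|w| a, X) to (a, 0), and then -j_+ X to X in the second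
  coordinate; the latter ends are antipodal only where G w = 0 and X = 0, which is off the
  sphere. *)

lemma zero_notin_closed_segment_nonantipodal:
  fixes u v :: "'a::real_normed_vector"
  assumes "norm u = 1" "norm v = 1" "u \<noteq> - v"
  shows "0 \<notin> closed_segment u v"
proof
  assume "0 \<in> closed_segment u v"
  then obtain t where "(1 - t) *\<^sub>R u + t *\<^sub>R v = 0" "0 \<le> t" "t \<le> 1"
    by (auto simp: in_segment)
  then have uv: "(1 - t) *\<^sub>R u = - (t *\<^sub>R v)"
    by (simp add: eq_neg_iff_add_eq_0)
  then have "1 - t = t"
    using \<open>0 \<le> t\<close> \<open>t \<le> 1\<close> assms(1,2)
    by (metis abs_of_nonneg diff_ge_0_iff_ge mult.right_neutral norm_minus_cancel norm_scaleR)
  with uv have "t *\<^sub>R u = t *\<^sub>R (- v)" and "t \<noteq> 0"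
    by auto
  then have "u = - v"
    by (metis scaleR_cancel_left)
  with assms(3) show False ..
qed

lemma Qt_swap_iff: "(b, a) \<in> Qt \<longleftrightarrow> (a, b) \<in> Qt"
  by (auto simp: Qt_def inner_commute)

lemma Qt_homotopic_fst:
  fixes f g q :: "'b::topological_space \<Rightarrow> 'v::real_inner"
  assumes "continuous_on S f" "continuous_on S g" "continuous_on S q"
    and "\<And>x. x \<in> S \<Longrightarrow> (f x, q x) \<in> Qt" "\<And>x. x \<in> S \<Longrightarrow> (g x, q x) \<in> Qt"
    and "\<And>x. x \<in> S \<Longrightarrow> f x \<noteq> - g x"
  shows "homotopic_with_canon (\<lambda>_. True) S Qt (\<lambda>x. (f x, q x)) (\<lambda>x. (g x, q x))"
proof -
  define T where "T = {(u, v :: 'v). u \<noteq> 0 \<and> norm v = 1 \<and> inner u v = 0}"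
  have "homotopic_with_canon (\<lambda>_. True) S T (\<lambda>x. (f x, q x)) (\<lambda>x. (g x, q x))"
  proof (rule homotopic_with_linear)
    show "closed_segment (f x, q x) (g x, q x) \<subseteq> T" if "x \<in> S" for x
    proof
      fix p assume "p \<in> closed_segment (f x, q x) (g x, q x)"
      then obtain t where p: "p = ((1 - t) *\<^sub>R f x + t *\<^sub>R g x, q x)" and "0 \<le> t" "t \<le> 1"
        by (auto simp: in_segment algebra_simps)
      have "0 \<notin> closed_segment (f x) (g x)"
        using assms(4-6) that by (intro zero_notin_closed_segment_nonantipodal) (auto simp: Qt_def)
      then have "(1 - t) *\<^sub>R f x + t *\<^sub>R g x \<noteq> 0"
        using \<open>0 \<le> t\<close> \<open>t \<le> 1\<close> by (auto simp: in_segment)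
      with assms(4,5) that show "p \<in> T"
        by (auto simp: T_def Qt_def p inner_add_left)
    qed
  qed (use assms(1-3) in \<open>auto intro: continuous_on_Pair\<close>)
  moreover have "continuous_on T (\<lambda>p. (sgn (fst p), snd p))"
    by (intro continuous_intros) (auto simp: T_def)
  moreover have "(\<lambda>p. (sgn (fst p), snd p)) \<in> T \<rightarrow> Qt"
    by (auto simp: T_def Qt_def norm_sgn sgn_div_norm)
  ultimately have "homotopic_with_canon (\<lambda>_. True) S Qt
      (\<lambda>x. (sgn (f x), q x)) (\<lambda>x. (sgn (g x), q x))"
    by (auto dest: homotopic_with_compose_continuous_left simp: o_def)
  moreover have "sgn (f x) = f x" "sgn (g x) = g x" if "x \<in> S" for x
    using assms(4,5) that by (auto simp: Qt_def sgn_div_norm)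
  ultimately show ?thesis
    by (auto elim!: homotopic_with_eq)
qed

lemma Qt_homotopic_snd:
  fixes f g q :: "'b::topological_space \<Rightarrow> 'v::real_inner"
  assumes "continuous_on S f" "continuous_on S g" "continuous_on S q"
    and "\<And>x. x \<in> S \<Longrightarrow> (q x, f x) \<in> Qt" "\<And>x. x \<in> S \<Longrightarrow> (q x, g x) \<in> Qt"
    and "\<And>x. x \<in> S \<Longrightarrow> f x \<noteq> - g x"
  shows "homotopic_with_canon (\<lambda>_. True) S Qt (\<lambda>x. (q x, f x)) (\<lambda>x. (q x, g x))"
proof -
  have "homotopic_with_canon (\<lambda>_. True) S Qt (\<lambda>x. (f x, q x)) (\<lambda>x. (g x, q x))"
    using assms by (intro Qt_homotopic_fst) (auto simp: Qt_swap_iff)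
  moreover have "continuous_on Qt prod.swap"
    by (intro continuous_intros)
  moreover have "prod.swap \<in> Qt \<rightarrow> Qt"
    by (auto simp: Qt_swap_iff)
  ultimately show ?thesis
    by (auto dest: homotopic_with_compose_continuous_left simp: o_def)
qed

definition radial_extension :: "('a::real_normed_vector \<Rightarrow> 'b::real_normed_vector) \<Rightarrow> 'a \<Rightarrow> 'b"
  where "radial_extension e w = norm w *\<^sub>R e (sgn w)"

lemma continuous_on_radial_extension:
  fixes e :: "'a::real_normed_vector \<Rightarrow> 'b::real_normed_vector"
  assumes "continuous_on (sphere 0 1) e" "e ` sphere 0 1 \<subseteq> sphere 0 1"
  shows "continuous_on UNIV (radial_extension e)"
proof (rule continuous_at_imp_continuous_on, clarify)
  fix w :: 'a
  show "isCont (radial_extension e) w"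
  proof (cases "w = 0")
    case True
    have bound: "norm (radial_extension e x) \<le> norm x" for x :: 'a
    proof (cases "x = 0")
      case False
      then have "sgn x \<in> sphere 0 1"
        by (simp add: norm_sgn)
      then have "e (sgn x) \<in> sphere 0 1"
        using assms(2) by blast
      then show ?thesis
        by (simp add: radial_extension_def)
    qed (simp add: radial_extension_def)
    have "(radial_extension e \<longlongrightarrow> 0) (at 0)"
      by (rule tendsto_0_le[where f="\<lambda>x. x" and K=1])
        (use bound in \<open>auto intro!: always_eventually tendsto_ident_at\<close>)
    with True show ?thesis
      by (simp add: isCont_def radial_extension_def)
  next
    case False
    have "continuous_on (- {0}) (sgn :: 'a \<Rightarrow> 'a)"
      by (intro continuous_on_sgn continuous_on_id) auto
    moreover have "sgn ` (- {0}) \<subseteq> sphere (0 :: 'a) 1"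
      by (auto simp: norm_sgn split: if_split_asm)
    ultimately have "continuous_on (- {0}) (e \<circ> sgn)"
      by (metis continuous_on_compose continuous_on_subset assms(1))
    with False have "isCont (\<lambda>x. e (sgn x)) w"
      by (simp add: continuous_on_eq_continuous_at open_Compl o_def)
    then show ?thesis
      unfolding radial_extension_def by (intro continuous_intros)
  qed
qed

lemma radial_extension_perp_sphere:
  assumes "e ` sphere 0 1 \<subseteq> perp_sphere a"
  shows "norm (radial_extension e w) = norm w" "inner a (radial_extension e w) = 0"
proof -
  have "norm (radial_extension e w) = norm w \<and> inner a (radial_extension e w) = 0"
  proof (cases "w = 0")
    case False
    then have "e (sgn w) \<in> perp_sphere a"
      using assms by (auto simp: norm_sgn)
    then show ?thesis
      by (simp add: radial_extension_def perp_sphere_def)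
  qed (simp add: radial_extension_def)
  then show "norm (radial_extension e w) = norm w" "inner a (radial_extension e w) = 0"
    by auto
qed

lemma norm_prod_eq_1_iff:
  fixes x :: "'a::real_normed_vector \<times> 'b::real_normed_vector"
  shows "norm x = 1 \<longleftrightarrow> norm (fst x) ^ 2 + norm (snd x) ^ 2 = 1"
  by (cases x) (simp add: norm_Pair)

lemma susp2_unit_sphere:
  assumes "x \<in> sphere 0 1"
  shows "susp2 f x = (radial_extension f (fst x), snd x)"
proof (cases x)
  case (Pair w X)
  have unit: "norm w ^ 2 + norm X ^ 2 = 1"
    using assms Pair by (simp add: norm_prod_eq_1_iff)
  show ?thesis
  proof (cases "norm X < 1")
    case True
    have "sqrt (1 - norm X ^ 2) = norm w"
      using unit by (intro real_sqrt_unique) auto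
    with True Pair show ?thesis
      by (simp add: susp2_def radial_extension_def sgn_div_norm divide_inverse_commute)
  next
    case False
    then have "1 \<le> norm X ^ 2"
      by (simp add: one_le_power)
    with unit have "norm w ^ 2 \<le> 0"
      by linarith
    then have "w = 0"
      by simp
    with False Pair show ?thesis
      by (simp add: susp2_def radial_extension_def)
  qed
qed

lemma Qt_homotopic_base_point:
  fixes G :: "'u::real_normed_vector \<Rightarrow> 'v::real_inner" and a :: 'v
  assumes "continuous_on UNIV G" "norm a = 1"
    and "\<And>w. norm (G w) = norm w" "\<And>w. inner a (G w) = 0"
  shows "homotopic_with_canon (\<lambda>_. True) (sphere (0 :: 'u \<times> complex) 1) Qt
           (\<lambda>x. ((norm (fst x) *\<^sub>R a, snd x), (G (fst x), - (\<i> * snd x))))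
           (\<lambda>x. ((a, 0), (G (fst x), - (\<i> * snd x))))"
proof (rule Qt_homotopic_fst)
  show "((norm (fst x) *\<^sub>R a, snd x), (G (fst x), - (\<i> * snd x))) \<in> Qt"
    and "((a, 0), (G (fst x), - (\<i> * snd x))) \<in> Qt" if "x \<in> sphere 0 1" for x
    using that assms(2-4)
    by (simp_all add: norm_prod_eq_1_iff Qt_def norm_Pair norm_mult inner_complex_def algebra_simps)
  show "(norm (fst x) *\<^sub>R a, snd x) \<noteq> - (a, 0)" for x
  proof
    assume "(norm (fst x) *\<^sub>R a, snd x) = - (a, 0)"
    then have "(norm (fst x) + 1) *\<^sub>R a = 0"
      by (simp add: scaleR_left_distrib)
    with assms(2) have "norm (fst x) + 1 = 0"
      by auto
    then show False
      using norm_ge_zero[of "fst x"] by linarith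
  qed
qed (auto intro!: continuous_intros continuous_on_compose2[OF assms(1)])

lemma pair_mult_ii_nonantipodal:
  fixes u :: "'a::real_normed_vector" and X :: complex
  assumes "(u, X) \<noteq> 0"
  shows "(u, - (\<i> * X)) \<noteq> - (u, X)"
proof
  assume "(u, - (\<i> * X)) = - (u, X)"
  then have "u = - u" "\<i> * X = X"
    by simp_all
  have "2 *\<^sub>R u = 0"
    using \<open>u = - u\<close> by (metis eq_neg_iff_add_eq_0 scaleR_2)
  moreover have "(\<i> - 1) * X = 0"
    using \<open>\<i> * X = X\<close> by (simp add: algebra_simps)
  moreover have "\<i> - 1 \<noteq> 0"
    by (simp add: complex_eq_iff)
  ultimately show False
    using assms by (simp add: zero_prod_def)
qed

lemma Qt_homotopic_rotate_plane:
  fixes G :: "'u::real_normed_vector \<Rightarrow> 'v::real_inner" and a :: 'v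
  assumes "continuous_on UNIV G" "norm a = 1"
    and "\<And>w. norm (G w) = norm w" "\<And>w. inner a (G w) = 0"
  shows "homotopic_with_canon (\<lambda>_. True) (sphere (0 :: 'u \<times> complex) 1) Qt
           (\<lambda>x. ((a, 0), (G (fst x), - (\<i> * snd x))))
           (\<lambda>x. ((a, 0), (G (fst x), snd x)))"
proof (rule Qt_homotopic_snd)
  show "((a, 0), (G (fst x), - (\<i> * snd x))) \<in> Qt" "((a, 0), (G (fst x), snd x)) \<in> Qt"
    if "x \<in> sphere 0 1" for x
    using that assms(2-4) by (simp_all add: norm_prod_eq_1_iff Qt_def norm_Pair norm_mult)
  show "(G (fst x), - (\<i> * snd x)) \<noteq> - (G (fst x), snd x)" if "x \<in> sphere 0 1" for x
  proof (rule pair_mult_ii_nonantipodal)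
    have "norm (G (fst x), snd x) = 1"
      using that assms(3) by (simp add: norm_Pair norm_prod_eq_1_iff)
    then show "(G (fst x), snd x) \<noteq> 0"
      by auto
  qed
qed (auto intro!: continuous_intros continuous_on_compose2[OF assms(1)])

theorem lemmaA2:
  fixes n :: nat and a :: "'a::euclidean_space" and eps :: "'a \<Rightarrow> 'a"
  assumes "n \<ge> 2" and "DIM('a) = 2 * n" and "norm a = 1"
    and "continuous_on (sphere 0 1) eps" and "eps ` sphere 0 1 \<subseteq> perp_sphere a"
    and "\<forall>g :: 'a \<Rightarrow> 'a. continuous_on (sphere 0 1) g \<and> g ` sphere 0 1 \<subseteq> perp_sphere a \<longrightarrow>
          (\<exists>d :: 'a \<Rightarrow> 'a. continuous_on (sphere 0 1) d \<and> d ` sphere 0 1 \<subseteq> sphere 0 1 \<and>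
             homotopic_with_canon (\<lambda>_. True) (sphere 0 1) (perp_sphere a) g (eps \<circ> d))"
  shows "homotopic_with_canon (\<lambda>_. True) (sphere (0 :: 'a \<times> complex) 1) Qt
           (iota \<circ> susp2 (fibre_incl a \<circ> eps))
           (\<lambda>x. ((a, 0), susp2 eps x))"
proof -
  let ?G = "radial_extension eps"
  have "eps ` sphere 0 1 \<subseteq> sphere 0 1"
    using assms(5) by (auto simp: perp_sphere_def)
  with assms(4) have cont: "continuous_on UNIV ?G"
    by (rule continuous_on_radial_extension)
  note G = radial_extension_perp_sphere[OF assms(5)]
  have "homotopic_with_canon (\<lambda>_. True) (sphere 0 1) Qt
      (\<lambda>x. ((norm (fst x) *\<^sub>R a, snd x), (?G (fst x), - (\<i> * snd x))))
      (\<lambda>x. ((a, 0), (?G (fst x), snd x)))"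
    using Qt_homotopic_base_point[OF cont assms(3) G] Qt_homotopic_rotate_plane[OF cont assms(3) G]
    by (rule homotopic_with_trans)
  then show ?thesis
  proof (rule homotopic_with_eq)
    fix x assume "x \<in> topspace (top_of_set (sphere (0 :: 'a \<times> complex) 1))"
    then show "(iota \<circ> susp2 (fibre_incl a \<circ> eps)) x
        = ((norm (fst x) *\<^sub>R a, snd x), (?G (fst x), - (\<i> * snd x)))"
      and "((a, 0), susp2 eps x) = ((a, 0), (?G (fst x), snd x))"
      by (simp_all add: susp2_unit_sphere iota_def fibre_incl_def radial_extension_def)
  qed simp
qed

end
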